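(* Let $\nu\in(0,1)$, $r=\min\{\nu,1-\nu\}$, $R=\max\{\nu,1-\nu\}$, and put $D(t):=L(t,1)-L(t^\nu,1)$. If $t>1$, then \begin{align*} &\frac{r}{\nu}\frac{(\sqrt t-1)^2}{\log t}\le D(t)\le \frac{R}{\nu}\frac{(\sqrt t-1)^2}{\log t},\\ &\frac{1-\nu}{2}\frac{(t-1)^2}{\max\{t,1\}\log t}\le D(t)\le \frac{1-\nu}{2}\frac{(t-1)^2}{\min\{t,1\}\log t},\\ &\frac{1-\nu}{2}\min\{t,1\}\log t\le D(t)\le \frac{1-\nu}{2}\max\{t,1\}\log t,\\ &\frac{1-\nu}{\nu}\min\left\{\frac{\nu}{1-\nu},\frac{1-\nu}{\nu}\right\}\big(L(t,1)-L(t^{1-\nu},1)\big)\le D(t)\le \frac{1-\nu}{\nu}\max\left\{\frac{\nu}{1-\nu},\frac{1-\nu}{\nu}\right\}\big(L(t,1)-L(t^{1-\nu},1)\big). \end{align*} If $0<t<1$, all these inequalities hold with the inequality signs reversed.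
   Context: For $x,y>0$, $x\ne y$, the logarithmic mean is $L(x,y):=\dfrac{x-y}{\log x-\log y}$. *)

theory Defs
  imports Complex_Main
begin

text \<open>Logarithmic mean, meant for x, y > 0 with x \<noteq> y.\<close>
definition logmean :: "real \<Rightarrow> real \<Rightarrow> real" where
  "logmean x y = (x - y) / (ln x - ln y)"

definition Dfun :: "real \<Rightarrow> real \<Rightarrow> real" where
  "Dfun \<nu> t = logmean t 1 - logmean (t powr \<nu>) 1"

end

theory Submission
  imports Defs "HOL-Analysis.Convex"
begin

text \<open>
  With the Young gap \<open>G\<^sub>\<nu>(t) = \<nu>(t - 1) + 1 - t\<^sup>\<nu>\<close>, the gap in the weighted
  AM-GM inequality \<open>t\<^sup>\<nu> \<le> (1 - \<nu>) + \<nu> t\<close>, one has \<open>D(t) = G\<^sub>\<nu>(t) / (\<nu> log t)\<close>.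
  So every pair of inequalities is a two-sided bound on \<open>G\<^sub>\<nu>(t)\<close> valid for all \<open>t > 0\<close>,
  divided by \<open>\<nu> log t\<close>, whose sign causes the reversal for \<open>t < 1\<close>.

  Since \<open>m \<mapsto> t\<^sup>m\<close> is convex, \<open>\<nu> \<mapsto> G\<^sub>\<nu>(t)\<close> is concave and vanishes at \<open>0\<close>
  and \<open>1\<close>; hence \<open>G\<^sub>\<nu>/\<nu>\<close> decreases and \<open>G\<^sub>\<nu>/(1 - \<nu>)\<close> increases in \<open>\<nu>\<close>.
  Comparing \<open>\<nu>\<close> with \<open>1/2\<close>, where \<open>G\<^bsub>1/2\<^esub>(t) = (\<surd>t - 1)\<^sup>2/2\<close>, and with
  \<open>1 - \<nu>\<close> gives the first and the last pair. For the other two, one half of each bound is a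
  monotonicity argument around \<open>t = 1\<close>, and the other half follows from it by the reflection
  \<open>G\<^sub>\<nu>(t) = t G\<^bsub>1-\<nu>\<^esub>(1/t)\<close>.
\<close>

lemma powr_exponent_chord:
  fixes t a b m :: real
  assumes "0 < t" "a \<le> m" "m \<le> b"
  shows "(b - a) * t powr m \<le> (b - m) * t powr a + (m - a) * t powr b"
proof (cases "a = b")
  case True
  then show ?thesis using assms by simp
next
  case False
  define l where "l = (m - a) / (b - a)"
  have l: "0 \<le> l" "l \<le> 1" and m: "m = a + l * (b - a)"
    using assms False by (auto simp: l_def field_simps)
  have "t powr m \<le> (1 - l) * t powr a + l * t powr b"
    using convex_onD[OF exp_convex, of l "a * ln t" "b * ln t"] l assms
    unfolding m by (simp add: powr_def algebra_simps)
  then have "(b - a) * t powr m \<le> (b - a) * ((1 - l) * t powr a + l * t powr b)"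
    using assms by (intro mult_left_mono) auto
  then show ?thesis
    unfolding m by (simp add: algebra_simps)
qed

lemma Bernoulli_inequality_powr_nonpos:
  fixes p y :: real
  assumes "p \<le> 0" "0 < y"
  shows "1 + p * (y - 1) \<le> y powr p"
proof -
  have "1 + p * (y - 1) \<le> 1 + p * ln y"
    using assms ln_le_minus_one[of y] by (simp add: mult_left_mono_neg)
  also have "\<dots> \<le> exp (p * ln y)"
    by (rule exp_ge_add_one_self)
  also have "\<dots> = y powr p"
    using assms by (simp add: powr_def)
  finally show ?thesis .
qed

lemma ln_mult_le_diff_powr:
  fixes \<nu> y :: real
  assumes "0 \<le> \<nu>" "\<nu> \<le> 1" "0 < y"
  shows "(1 - \<nu>) * ln y \<le> y - y powr \<nu>"
proof -
  have tangent: "(1 - \<nu>) * ln y \<le> y powr (1 - \<nu>) - 1"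
  proof -
    have "y powr (1 - \<nu>) = exp ((1 - \<nu>) * ln y)"
      using assms by (simp add: powr_def)
    then show ?thesis
      using exp_ge_add_one_self[of "(1 - \<nu>) * ln y"] by linarith
  qed
  have "0 \<le> (y powr \<nu> - 1) * (y powr (1 - \<nu>) - 1)"
  proof (cases "1 \<le> y")
    case True
    then show ?thesis using assms by (simp add: ge_one_powr_ge_zero)
  next
    case False
    then show ?thesis using assms by (intro mult_nonpos_nonpos) (simp_all add: powr_le1)
  qed
  moreover have "y - y powr \<nu> = y powr \<nu> * (y powr (1 - \<nu>) - 1)"
    using assms by (simp add: algebra_simps flip: powr_add)
  ultimately show ?thesis
    using tangent by (simp add: algebra_simps)
qed

lemma DERIV_nonneg_imp_mono_between:
  fixes f f' :: "real \<Rightarrow> real"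
  assumes "\<And>y. y \<in> S \<Longrightarrow> (f has_real_derivative f' y) (at y)"
    and "\<And>y. y \<in> S \<Longrightarrow> 0 \<le> f' y"
    and "{min c t..max c t} \<subseteq> S"
  shows "c \<le> t \<Longrightarrow> f c \<le> f t" and "t \<le> c \<Longrightarrow> f t \<le> f c"
  using assms by (auto intro!: deriv_nonneg_imp_mono[of _ _ f f'] simp: subset_iff)

definition young_gap :: "real \<Rightarrow> real \<Rightarrow> real" where
  "young_gap \<nu> t = \<nu> * (t - 1) + 1 - t powr \<nu>"

lemma Dfun_eq_young_gap:
  assumes "\<nu> \<noteq> 0" "0 < t" "t \<noteq> 1"
  shows "Dfun \<nu> t = young_gap \<nu> t / (\<nu> * ln t)"
  using assms by (simp add: Dfun_def logmean_def young_gap_def field_simps)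

lemma young_gap_half: "0 < t \<Longrightarrow> young_gap (1/2) t = (sqrt t - 1)^2 / 2"
  by (simp add: young_gap_def powr_half_sqrt power2_eq_square field_simps)

lemma young_gap_reflect: "0 < t \<Longrightarrow> young_gap \<nu> t = t * young_gap (1 - \<nu>) (1 / t)"
  by (simp add: young_gap_def powr_divide powr_diff field_simps)

lemma young_gap_exponent_compare:
  assumes "0 < t" "0 \<le> \<mu>" "\<mu> \<le> \<nu>" "\<nu> \<le> 1"
  shows "\<mu> * young_gap \<nu> t \<le> \<nu> * young_gap \<mu> t"
    and "(1 - \<nu>) * young_gap \<mu> t \<le> (1 - \<mu>) * young_gap \<nu> t"
  using powr_exponent_chord[of t 0 \<mu> \<nu>] powr_exponent_chord[of t \<mu> \<nu> 1] assms
  by (simp_all add: young_gap_def algebra_simps)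

lemma young_gap_sqrt_bounds:
  assumes "0 \<le> \<nu>" "\<nu> \<le> 1" "0 < t"
  shows "min \<nu> (1 - \<nu>) * (sqrt t - 1)^2 \<le> young_gap \<nu> t"
    and "young_gap \<nu> t \<le> max \<nu> (1 - \<nu>) * (sqrt t - 1)^2"
proof -
  note half = young_gap_half[OF assms(3)]
  have "min \<nu> (1 - \<nu>) * (sqrt t - 1)^2 \<le> young_gap \<nu> t
    \<and> young_gap \<nu> t \<le> max \<nu> (1 - \<nu>) * (sqrt t - 1)^2"
  proof (cases "\<nu> \<le> 1/2")
    case True
    then show ?thesis
      using young_gap_exponent_compare[of t \<nu> "1/2"] assms by (simp add: half)
  next
    case False
    then show ?thesis
      using young_gap_exponent_compare[of t "1/2" \<nu>] assms by (simp add: half)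
  qed
  then show "min \<nu> (1 - \<nu>) * (sqrt t - 1)^2 \<le> young_gap \<nu> t"
    and "young_gap \<nu> t \<le> max \<nu> (1 - \<nu>) * (sqrt t - 1)^2"
    by simp_all
qed

lemma young_gap_complement_bounds:
  assumes "0 < \<nu>" "\<nu> < 1" "0 < t"
  shows "min (\<nu> / (1 - \<nu>)) ((1 - \<nu>) / \<nu>) * young_gap (1 - \<nu>) t \<le> young_gap \<nu> t"
    and "young_gap \<nu> t \<le> max (\<nu> / (1 - \<nu>)) ((1 - \<nu>) / \<nu>) * young_gap (1 - \<nu>) t"
proof -
  have "min (\<nu> / (1 - \<nu>)) ((1 - \<nu>) / \<nu>) * young_gap (1 - \<nu>) t \<le> young_gap \<nu> t
    \<and> young_gap \<nu> t \<le> max (\<nu> / (1 - \<nu>)) ((1 - \<nu>) / \<nu>) * young_gap (1 - \<nu>) t"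
  proof (cases "\<nu> \<le> 1/2")
    case True
    then have "min (\<nu> / (1 - \<nu>)) ((1 - \<nu>) / \<nu>) = \<nu> / (1 - \<nu>)"
      and "max (\<nu> / (1 - \<nu>)) ((1 - \<nu>) / \<nu>) = (1 - \<nu>) / \<nu>"
      using assms by (auto simp: min_def max_def field_simps)
    with True assms young_gap_exponent_compare[of t \<nu> "1 - \<nu>"] show ?thesis
      by (simp add: field_simps)
  next
    case False
    then have "min (\<nu> / (1 - \<nu>)) ((1 - \<nu>) / \<nu>) = (1 - \<nu>) / \<nu>"
      and "max (\<nu> / (1 - \<nu>)) ((1 - \<nu>) / \<nu>) = \<nu> / (1 - \<nu>)"
      using assms by (auto simp: min_def max_def field_simps)
    with False assms young_gap_exponent_compare[of t "1 - \<nu>" \<nu>] show ?thesis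
      by (simp add: field_simps)
  qed
  then show "min (\<nu> / (1 - \<nu>)) ((1 - \<nu>) / \<nu>) * young_gap (1 - \<nu>) t \<le> young_gap \<nu> t"
    and "young_gap \<nu> t \<le> max (\<nu> / (1 - \<nu>)) ((1 - \<nu>) / \<nu>) * young_gap (1 - \<nu>) t"
    by simp_all
qed

lemma young_gap_square_sign:
  assumes "0 \<le> \<nu>" "\<nu> \<le> 1" "0 < t"
  shows "1 \<le> t \<Longrightarrow> young_gap \<nu> t \<le> \<nu> * (1 - \<nu>) / 2 * (t - 1)^2"
    and "t \<le> 1 \<Longrightarrow> \<nu> * (1 - \<nu>) / 2 * (t - 1)^2 \<le> young_gap \<nu> t"
proof -
  define h where "h y = \<nu> * (1 - \<nu>) / 2 * (y - 1)^2 - young_gap \<nu> y" for y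
  define h' where "h' y = \<nu> * ((1 - \<nu>) * (y - 1) - 1 + y powr (\<nu> - 1))" for y
  have "(h has_real_derivative h' y) (at y)" if "y \<in> {0<..}" for y
    unfolding h_def[abs_def] h'_def young_gap_def using that
    by (auto intro!: derivative_eq_intros simp: field_simps power2_eq_square)
  moreover have "0 \<le> h' y" if "y \<in> {0<..}" for y
    using Bernoulli_inequality_powr_nonpos[of "\<nu> - 1" y] that assms
    unfolding h'_def by (intro mult_nonneg_nonneg) (auto simp: algebra_simps)
  moreover have "{min 1 t..max 1 t} \<subseteq> {0<..}"
    using assms by auto
  moreover have "h 1 = 0"
    by (simp add: h_def young_gap_def)
  ultimately show "1 \<le> t \<Longrightarrow> young_gap \<nu> t \<le> \<nu> * (1 - \<nu>) / 2 * (t - 1)^2"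
    and "t \<le> 1 \<Longrightarrow> \<nu> * (1 - \<nu>) / 2 * (t - 1)^2 \<le> young_gap \<nu> t"
    using DERIV_nonneg_imp_mono_between[of "{0<..}" h h' 1 t] by (auto simp: h_def)
qed

lemma young_gap_quadratic_bounds:
  assumes "0 \<le> \<nu>" "\<nu> \<le> 1" "0 < t"
  shows "\<nu> * (1 - \<nu>) / 2 * (t - 1)^2 / max t 1 \<le> young_gap \<nu> t"
    and "young_gap \<nu> t \<le> \<nu> * (1 - \<nu>) / 2 * (t - 1)^2 / min t 1"
proof -
  have reflect: "young_gap \<nu> t = t * young_gap (1 - \<nu>) (1 / t)"
    using assms(3) by (rule young_gap_reflect)
  have coeff: "(1 - \<nu>) * (1 - (1 - \<nu>)) = \<nu> * (1 - \<nu>)"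
    by simp
  have "0 \<le> 1 - \<nu>" "1 - \<nu> \<le> 1" "0 < 1 / t"
    using assms by auto
  note reflected_sign = young_gap_square_sign[OF this, unfolded coeff]
  have square: "t * (\<nu> * (1 - \<nu>) / 2 * (1 / t - 1)^2) = \<nu> * (1 - \<nu>) / 2 * (t - 1)^2 / t"
    using assms by (simp add: power2_eq_square field_simps)
  note square_sign = young_gap_square_sign[of \<nu> t]
  show "\<nu> * (1 - \<nu>) / 2 * (t - 1)^2 / max t 1 \<le> young_gap \<nu> t"
  proof (cases "1 \<le> t")
    case True
    then have "\<nu> * (1 - \<nu>) / 2 * (t - 1)^2 / max t 1 = t * (\<nu> * (1 - \<nu>) / 2 * (1 / t - 1)^2)"
      using square by simp
    also have "\<dots> \<le> t * young_gap (1 - \<nu>) (1 / t)"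
      using True reflected_sign assms by (intro mult_left_mono) auto
    finally show ?thesis
      by (simp only: reflect)
  qed (use square_sign assms in auto)
  show "young_gap \<nu> t \<le> \<nu> * (1 - \<nu>) / 2 * (t - 1)^2 / min t 1"
  proof (cases "1 \<le> t")
    case False
    have "young_gap \<nu> t \<le> t * (\<nu> * (1 - \<nu>) / 2 * (1 / t - 1)^2)"
      unfolding reflect using False reflected_sign assms by (intro mult_left_mono) auto
    also have "\<dots> = \<nu> * (1 - \<nu>) / 2 * (t - 1)^2 / min t 1"
      using False square by simp
    finally show ?thesis .
  qed (use square_sign assms in auto)
qed

lemma young_gap_log_square_sign:
  assumes "0 \<le> \<nu>" "\<nu> \<le> 1" "0 < t"
  shows "1 \<le> t \<Longrightarrow> \<nu> * (1 - \<nu>) / 2 * (ln t)^2 \<le> young_gap \<nu> t"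
    and "t \<le> 1 \<Longrightarrow> young_gap \<nu> t \<le> \<nu> * (1 - \<nu>) / 2 * (ln t)^2"
proof -
  define w where "w y = young_gap \<nu> y - \<nu> * (1 - \<nu>) / 2 * (ln y)^2" for y
  define w' where "w' y = \<nu> / y * (y - y powr \<nu> - (1 - \<nu>) * ln y)" for y
  have "(w has_real_derivative w' y) (at y)" if "y \<in> {0<..}" for y
    unfolding w_def[abs_def] w'_def young_gap_def using that
    by (auto intro!: derivative_eq_intros simp: field_simps power2_eq_square powr_diff)
  moreover have "0 \<le> w' y" if "y \<in> {0<..}" for y
    using ln_mult_le_diff_powr[of \<nu> y] that assms unfolding w'_def by simp
  moreover have "{min 1 t..max 1 t} \<subseteq> {0<..}"
    using assms by auto
  moreover have "w 1 = 0"
    by (simp add: w_def young_gap_def)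
  ultimately show "1 \<le> t \<Longrightarrow> \<nu> * (1 - \<nu>) / 2 * (ln t)^2 \<le> young_gap \<nu> t"
    and "t \<le> 1 \<Longrightarrow> young_gap \<nu> t \<le> \<nu> * (1 - \<nu>) / 2 * (ln t)^2"
    using DERIV_nonneg_imp_mono_between[of "{0<..}" w w' 1 t] by (auto simp: w_def)
qed

lemma young_gap_log_bounds:
  assumes "0 \<le> \<nu>" "\<nu> \<le> 1" "0 < t"
  shows "\<nu> * (1 - \<nu>) / 2 * min t 1 * (ln t)^2 \<le> young_gap \<nu> t"
    and "young_gap \<nu> t \<le> \<nu> * (1 - \<nu>) / 2 * max t 1 * (ln t)^2"
proof -
  have reflect: "young_gap \<nu> t = t * young_gap (1 - \<nu>) (1 / t)"
    using assms(3) by (rule young_gap_reflect)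
  have coeff: "(1 - \<nu>) * (1 - (1 - \<nu>)) = \<nu> * (1 - \<nu>)"
    by simp
  have ln_inverse: "ln (1 / t) = - ln t"
    using assms by (simp add: ln_div)
  have "0 \<le> 1 - \<nu>" "1 - \<nu> \<le> 1" "0 < 1 / t"
    using assms by auto
  note reflected_sign = young_gap_log_square_sign[OF this, unfolded coeff ln_inverse power2_minus]
  note log_square_sign = young_gap_log_square_sign[of \<nu> t]
  show "\<nu> * (1 - \<nu>) / 2 * min t 1 * (ln t)^2 \<le> young_gap \<nu> t"
  proof (cases "1 \<le> t")
    case False
    then have "\<nu> * (1 - \<nu>) / 2 * min t 1 * (ln t)^2 = t * (\<nu> * (1 - \<nu>) / 2 * (ln t)^2)"
      by simp
    also have "\<dots> \<le> t * young_gap (1 - \<nu>) (1 / t)"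
      using False reflected_sign assms by (intro mult_left_mono) auto
    finally show ?thesis
      by (simp only: reflect)
  qed (use log_square_sign assms in auto)
  show "young_gap \<nu> t \<le> \<nu> * (1 - \<nu>) / 2 * max t 1 * (ln t)^2"
  proof (cases "1 \<le> t")
    case True
    have "young_gap \<nu> t \<le> t * (\<nu> * (1 - \<nu>) / 2 * (ln t)^2)"
      unfolding reflect using True reflected_sign assms by (intro mult_left_mono) auto
    also have "\<dots> = \<nu> * (1 - \<nu>) / 2 * max t 1 * (ln t)^2"
      using True by simp
    finally show ?thesis .
  qed (use log_square_sign assms in auto)
qed

lemma Dfun_bounds_of_young_gap_bounds:
  assumes "0 < \<nu>" "0 < t" "t \<noteq> 1"
    and lower: "A * (\<nu> * ln t) \<le> young_gap \<nu> t" and upper: "young_gap \<nu> t \<le> B * (\<nu> * ln t)"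
  shows "(1 < t \<longrightarrow> A \<le> Dfun \<nu> t \<and> Dfun \<nu> t \<le> B)
    \<and> (0 < t \<and> t < 1 \<longrightarrow> A \<ge> Dfun \<nu> t \<and> Dfun \<nu> t \<ge> B)"
proof -
  have D: "Dfun \<nu> t = young_gap \<nu> t / (\<nu> * ln t)"
    using assms by (simp add: Dfun_eq_young_gap)
  have "1 < t \<Longrightarrow> 0 < \<nu> * ln t" and "t < 1 \<Longrightarrow> \<nu> * ln t < 0"
    using assms by (simp_all add: mult_pos_neg)
  then show ?thesis
    unfolding D using lower upper
    by (auto simp: pos_le_divide_eq pos_divide_le_eq neg_le_divide_eq neg_divide_le_eq)
qed

theorem proposition2p6:
  fixes \<nu> t :: real
  assumes "0 < \<nu>" and "\<nu> < 1"
  defines "r \<equiv> min \<nu> (1 - \<nu>)" and "R \<equiv> max \<nu> (1 - \<nu>)"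
  shows "(1 < t \<longrightarrow>
      r / \<nu> * (sqrt t - 1)^2 / ln t \<le> Dfun \<nu> t
    \<and> Dfun \<nu> t \<le> R / \<nu> * (sqrt t - 1)^2 / ln t
    \<and> (1 - \<nu>) / 2 * (t - 1)^2 / (max t 1 * ln t) \<le> Dfun \<nu> t
    \<and> Dfun \<nu> t \<le> (1 - \<nu>) / 2 * (t - 1)^2 / (min t 1 * ln t)
    \<and> (1 - \<nu>) / 2 * min t 1 * ln t \<le> Dfun \<nu> t
    \<and> Dfun \<nu> t \<le> (1 - \<nu>) / 2 * max t 1 * ln t
    \<and> (1 - \<nu>) / \<nu> * min (\<nu> / (1 - \<nu>)) ((1 - \<nu>) / \<nu>)
        * (logmean t 1 - logmean (t powr (1 - \<nu>)) 1) \<le> Dfun \<nu> t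
    \<and> Dfun \<nu> t \<le> (1 - \<nu>) / \<nu> * max (\<nu> / (1 - \<nu>)) ((1 - \<nu>) / \<nu>)
        * (logmean t 1 - logmean (t powr (1 - \<nu>)) 1))
   \<and> (0 < t \<and> t < 1 \<longrightarrow>
      r / \<nu> * (sqrt t - 1)^2 / ln t \<ge> Dfun \<nu> t
    \<and> Dfun \<nu> t \<ge> R / \<nu> * (sqrt t - 1)^2 / ln t
    \<and> (1 - \<nu>) / 2 * (t - 1)^2 / (max t 1 * ln t) \<ge> Dfun \<nu> t
    \<and> Dfun \<nu> t \<ge> (1 - \<nu>) / 2 * (t - 1)^2 / (min t 1 * ln t)
    \<and> (1 - \<nu>) / 2 * min t 1 * ln t \<ge> Dfun \<nu> t
    \<and> Dfun \<nu> t \<ge> (1 - \<nu>) / 2 * max t 1 * ln t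
    \<and> (1 - \<nu>) / \<nu> * min (\<nu> / (1 - \<nu>)) ((1 - \<nu>) / \<nu>)
        * (logmean t 1 - logmean (t powr (1 - \<nu>)) 1) \<ge> Dfun \<nu> t
    \<and> Dfun \<nu> t \<ge> (1 - \<nu>) / \<nu> * max (\<nu> / (1 - \<nu>)) ((1 - \<nu>) / \<nu>)
        * (logmean t 1 - logmean (t powr (1 - \<nu>)) 1))"
proof (cases "0 < t \<and> t \<noteq> 1")
  case False
  then show ?thesis by auto
next
  case True
  then have t: "0 < t" "t \<noteq> 1" and "ln t \<noteq> 0" by auto
  have \<nu>: "0 \<le> \<nu>" "\<nu> \<le> 1" and "1 - \<nu> \<noteq> 0"
    using assms by auto
  let ?bounds = "\<lambda>A B. (1 < t \<longrightarrow> A \<le> Dfun \<nu> t \<and> Dfun \<nu> t \<le> B)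
    \<and> (0 < t \<and> t < 1 \<longrightarrow> A \<ge> Dfun \<nu> t \<and> Dfun \<nu> t \<ge> B)"
  have complement:
    "logmean t 1 - logmean (t powr (1 - \<nu>)) 1 = young_gap (1 - \<nu>) t / ((1 - \<nu>) * ln t)"
    using Dfun_eq_young_gap[OF \<open>1 - \<nu> \<noteq> 0\<close> t] by (simp add: Dfun_def)
  note from_young_gap = Dfun_bounds_of_young_gap_bounds[OF assms(1) t]
  have "?bounds (r / \<nu> * (sqrt t - 1)^2 / ln t) (R / \<nu> * (sqrt t - 1)^2 / ln t)"
    by (rule from_young_gap)
      (use young_gap_sqrt_bounds[OF \<nu> t(1)] \<open>ln t \<noteq> 0\<close> assms in simp_all)
  moreover have "?bounds ((1 - \<nu>) / 2 * (t - 1)^2 / (max t 1 * ln t))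
      ((1 - \<nu>) / 2 * (t - 1)^2 / (min t 1 * ln t))"
    by (rule from_young_gap)
      (use young_gap_quadratic_bounds[OF \<nu> t(1)] \<open>ln t \<noteq> 0\<close> assms in \<open>simp_all add: mult_ac\<close>)
  moreover have "?bounds ((1 - \<nu>) / 2 * min t 1 * ln t) ((1 - \<nu>) / 2 * max t 1 * ln t)"
    by (rule from_young_gap)
      (use young_gap_log_bounds[OF \<nu> t(1)] in \<open>simp_all add: power2_eq_square mult_ac\<close>)
  moreover have "?bounds
      ((1 - \<nu>) / \<nu> * min (\<nu> / (1 - \<nu>)) ((1 - \<nu>) / \<nu>) * (logmean t 1 - logmean (t powr (1 - \<nu>)) 1))
      ((1 - \<nu>) / \<nu> * max (\<nu> / (1 - \<nu>)) ((1 - \<nu>) / \<nu>) * (logmean t 1 - logmean (t powr (1 - \<nu>)) 1))"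
    by (rule from_young_gap)
      (use young_gap_complement_bounds[OF assms(1,2) t(1)] complement \<open>ln t \<noteq> 0\<close> \<open>1 - \<nu> \<noteq> 0\<close> assms
        in simp_all)
  ultimately show ?thesis by blast
qed

end
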